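(* Let $t:\Sigma^*\to\Omega^*$ be a rational partial function with suffix-closed domain $X=\mathrm{dom}(t)$. There is a constant $c$ (depending only on $t$) such that for all $u,v,w\in\Sigma^*$ with $uw,vw\in X$ and $u\mathrel{\mathcal R_t}v$ we have $\|t(uw),t(vw)\|\le c\,(|u|+|v|)$, i.e. $\|t(uw),t(vw)\|\in O(|u|+|v|)$.
   Context: For words $x,y$, $x\wedge y$ is their longest common suffix and $\|x,y\|=|x|+|y|-2|x\wedge y|$. $u\mathrel{\mathcal R_t}v$ iff $\{z:uz\in X\}=\{z:vz\in X\}$ and the set $\{\|t(uw),t(vw)\|:uw,vw\in X\}$ is finite. *)

theory Defs
  imports Main
begin

text \<open>A (nondeterministic, finite) transducer with states of type nat is given by a
finite set of initial states I, final states F and a finite set of transitions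
(p, x, y, q), reading the input word x and writing the output word y.\<close>

inductive path :: "(nat \<times> 'a list \<times> 'b list \<times> nat) set \<Rightarrow> nat \<Rightarrow> 'a list \<Rightarrow> 'b list \<Rightarrow> nat \<Rightarrow> bool"
  for \<Delta> where
  path_nil: "path \<Delta> p [] [] p"
| path_snoc: "path \<Delta> p x y q \<Longrightarrow> (q, a, b, r) \<in> \<Delta> \<Longrightarrow> path \<Delta> p (x @ a) (y @ b) r"

definition rational_relation :: "('a list \<times> 'b list) set \<Rightarrow> bool" where
  "rational_relation R \<longleftrightarrow>
     (\<exists>(I::nat set) (F::nat set) (\<Delta>::(nat \<times> 'a list \<times> 'b list \<times> nat) set).
        finite I \<and> finite F \<and> finite \<Delta> \<and>
        R = {(x, y). \<exists>p\<in>I. \<exists>q\<in>F. path \<Delta> p x y q})"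

definition rational_function :: "('a list \<Rightarrow> 'b list option) \<Rightarrow> bool" where
  "rational_function t \<longleftrightarrow> rational_relation {(x, y). t x = Some y}"

definition suffix_closed :: "'a list set \<Rightarrow> bool" where
  "suffix_closed X \<longleftrightarrow> (\<forall>u w. u @ w \<in> X \<longrightarrow> w \<in> X)"

fun lcp :: "'a list \<Rightarrow> 'a list \<Rightarrow> 'a list" where
  "lcp (a # xs) (b # ys) = (if a = b then a # lcp xs ys else [])"
| "lcp _ _ = []"

definition lcsuf :: "'a list \<Rightarrow> 'a list \<Rightarrow> 'a list" where
  "lcsuf x y = rev (lcp (rev x) (rev y))"

definition wdist :: "'a list \<Rightarrow> 'a list \<Rightarrow> nat" where
  "wdist x y = length x + length y - 2 * length (lcsuf x y)"

definition R_rel :: "('a list \<Rightarrow> 'b list option) \<Rightarrow> 'a list \<Rightarrow> 'a list \<Rightarrow> bool" where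
  "R_rel t u v \<longleftrightarrow>
     {z. t (u @ z) \<noteq> None} = {z. t (v @ z) \<noteq> None} \<and>
     finite {wdist (the (t (u @ w))) (the (t (v @ w))) | w. t (u @ w) \<noteq> None \<and> t (v @ w) \<noteq> None}"

end

theory Submission
  imports Defs "HOL-Library.Sublist"
begin

text \<open>Fix a transducer for \<open>t\<close> with state set \<open>Q\<close>. For an input \<open>u w\<close> take a shortest
  accepting run. Its configurations (state, length of input consumed so far) are pairwise
  distinct, because a repeated configuration encloses a loop reading no input, which could be
  cut out. Cut the run inside the transition that finishes reading \<open>u\<close>, leaving a pending
  part \<open>z\<close> of that transition's input. By pigeonhole the prefix has at most \<open>|Q| (|u| + 1)\<close>
  transitions, so its output \<open>\<alpha>\<close> has length \<open>O(|u|)\<close>, and every accepting continuation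
  from the configuration \<open>(q, z)\<close> on \<open>z w'\<close> with output \<open>y\<close> gives \<open>t (u w') = \<alpha> y\<close>.

  Doing the same for \<open>v\<close>, the distances between continuation outputs from the two
  configurations differ from the distances between \<open>t (u w')\<close> and \<open>t (v w')\<close> by at most
  \<open>|\<alpha>| + |\<beta>|\<close>, and \<open>R\<^sub>t\<close> makes the latter finitely many. As there are only
  finitely many configurations, one constant \<open>M\<close> bounds every finite set of such residual
  distances, and the distance between \<open>t (u w)\<close> and \<open>t (v w)\<close> is at most
  \<open>|\<alpha>| + |\<beta>| + M = O(|u| + |v|)\<close>, by the triangle inequality for the suffix distance.\<close>

lemma lcp_eq_longest_common_prefix: "lcp = longest_common_prefix"
proof (intro ext)
  fix xs ys :: "'a list"
  show "lcp xs ys = longest_common_prefix xs ys"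
    by (induction xs ys rule: lcp.induct) auto
qed

lemma suffix_lcsuf1: "suffix (lcsuf x y) x"
  by (simp add: lcsuf_def suffix_to_prefix lcp_eq_longest_common_prefix
      longest_common_prefix_prefix1)

lemma suffix_lcsuf2: "suffix (lcsuf x y) y"
  by (simp add: lcsuf_def suffix_to_prefix lcp_eq_longest_common_prefix
      longest_common_prefix_prefix2)

lemma suffix_lcsuf_greatest: "suffix z x \<Longrightarrow> suffix z y \<Longrightarrow> suffix z (lcsuf x y)"
  by (simp add: lcsuf_def suffix_to_prefix lcp_eq_longest_common_prefix
      longest_common_prefix_max_prefix)

lemma lcsuf_commute: "lcsuf x y = lcsuf y x"
  by (intro suffix_order.antisym suffix_lcsuf_greatest suffix_lcsuf1 suffix_lcsuf2)

lemma lcsuf_append_left: "lcsuf (a @ x) x = x"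
  by (intro suffix_order.antisym suffix_lcsuf2 suffix_lcsuf_greatest suffix_appendI)
    (rule suffix_order.refl)+

lemma wdist_commute: "wdist x y = wdist y x"
  by (simp add: wdist_def lcsuf_commute)

lemma wdist_append_left: "wdist (a @ x) x = length a"
  by (simp add: wdist_def lcsuf_append_left)

lemma wdist_self: "wdist x x = 0"
  using wdist_append_left[of "[]" x] by simp

text \<open>Common suffixes of \<open>y\<close> are linearly ordered, so the shorter of the two is a
  common suffix of \<open>x\<close> and \<open>z\<close>.\<close>

lemma min_length_lcsuf_le: "min (length (lcsuf x y)) (length (lcsuf y z)) \<le> length (lcsuf x z)"
  using suffix_same_cases[OF suffix_lcsuf2[of x y] suffix_lcsuf1[of y z]]
proof
  assume "suffix (lcsuf x y) (lcsuf y z)"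
  then have "suffix (lcsuf x y) (lcsuf x z)"
    using suffix_lcsuf1 suffix_lcsuf2 suffix_lcsuf_greatest suffix_order.trans by metis
  then show ?thesis
    by (simp add: min.coboundedI1 suffix_length_le)
next
  assume "suffix (lcsuf y z) (lcsuf x y)"
  then have "suffix (lcsuf y z) (lcsuf x z)"
    using suffix_lcsuf1 suffix_lcsuf2 suffix_lcsuf_greatest suffix_order.trans by metis
  then show ?thesis
    by (simp add: min.coboundedI2 suffix_length_le)
qed

lemma wdist_triangle: "wdist x z \<le> wdist x y + wdist y z"
  using min_length_lcsuf_le[of x y z]
    suffix_length_le[OF suffix_lcsuf1[of x y]] suffix_length_le[OF suffix_lcsuf2[of x y]]
    suffix_length_le[OF suffix_lcsuf1[of y z]] suffix_length_le[OF suffix_lcsuf2[of y z]]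
    suffix_length_le[OF suffix_lcsuf1[of x z]] suffix_length_le[OF suffix_lcsuf2[of x z]]
  unfolding wdist_def by linarith

lemma wdist_append_le: "wdist (a @ x) (b @ y) \<le> length a + wdist x y + length b"
proof -
  have "wdist (a @ x) (b @ y) \<le> wdist (a @ x) x + wdist x (b @ y)"
    by (rule wdist_triangle)
  also have "wdist x (b @ y) \<le> wdist x y + wdist y (b @ y)"
    by (rule wdist_triangle)
  finally show ?thesis
    by (simp add: wdist_append_left wdist_commute[of y])
qed

lemma wdist_le_append: "wdist x y \<le> length a + wdist (a @ x) (b @ y) + length b"
proof -
  have "wdist x y \<le> wdist x (a @ x) + wdist (a @ x) y"
    by (rule wdist_triangle)
  also have "wdist (a @ x) y \<le> wdist (a @ x) (b @ y) + wdist (b @ y) y"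
    by (rule wdist_triangle)
  finally show ?thesis
    by (simp add: wdist_append_left wdist_commute[of x])
qed

type_synonym ('a, 'b) transition = "nat \<times> 'a list \<times> 'b list \<times> nat"

fun run :: "('a, 'b) transition set \<Rightarrow> nat \<Rightarrow> ('a, 'b) transition list \<Rightarrow> bool" where
  "run \<Delta> p [] \<longleftrightarrow> True"
| "run \<Delta> p ((p', x, y, q) # \<rho>) \<longleftrightarrow> (p', x, y, q) \<in> \<Delta> \<and> p' = p \<and> run \<Delta> q \<rho>"

fun target :: "nat \<Rightarrow> ('a, 'b) transition list \<Rightarrow> nat" where
  "target p [] = p"
| "target p ((p', x, y, q) # \<rho>) = target q \<rho>"

definition run_input :: "('a, 'b) transition list \<Rightarrow> 'a list" where
  "run_input \<rho> = concat (map (\<lambda>(p, x, y, q). x) \<rho>)"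

definition run_output :: "('a, 'b) transition list \<Rightarrow> 'b list" where
  "run_output \<rho> = concat (map (\<lambda>(p, x, y, q). y) \<rho>)"

lemma run_append [simp]: "run \<Delta> p (\<rho> @ \<sigma>) \<longleftrightarrow> run \<Delta> p \<rho> \<and> run \<Delta> (target p \<rho>) \<sigma>"
  by (induction \<Delta> p \<rho> rule: run.induct) auto

lemma target_append [simp]: "target p (\<rho> @ \<sigma>) = target (target p \<rho>) \<sigma>"
  by (induction p \<rho> rule: target.induct) auto

lemma run_take: "run \<Delta> p \<rho> \<Longrightarrow> run \<Delta> p (take k \<rho>)"
  by (metis append_take_drop_id run_append)

lemma run_input_simps [simp]:
  "run_input [] = []" "run_input ((p, x, y, q) # \<rho>) = x @ run_input \<rho>"
  "run_input (\<rho> @ \<sigma>) = run_input \<rho> @ run_input \<sigma>"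
  by (simp_all add: run_input_def)

lemma run_output_simps [simp]:
  "run_output [] = []" "run_output ((p, x, y, q) # \<rho>) = y @ run_output \<rho>"
  "run_output (\<rho> @ \<sigma>) = run_output \<rho> @ run_output \<sigma>"
  by (simp_all add: run_output_def)

lemma path_iff_run:
  "path \<Delta> p x y q \<longleftrightarrow> (\<exists>\<rho>. run \<Delta> p \<rho> \<and> target p \<rho> = q \<and> run_input \<rho> = x \<and> run_output \<rho> = y)"
proof
  assume "path \<Delta> p x y q"
  then show "\<exists>\<rho>. run \<Delta> p \<rho> \<and> target p \<rho> = q \<and> run_input \<rho> = x \<and> run_output \<rho> = y"
  proof (induction rule: path.induct)
    case (path_nil p)
    show ?case by (rule exI[of _ "[]"]) simp
  next
    case (path_snoc p x y q a b r)
    then obtain \<rho> where "run \<Delta> p \<rho>" "target p \<rho> = q" "run_input \<rho> = x" "run_output \<rho> = y"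
      by blast
    with path_snoc.hyps(2) show ?case
      by (intro exI[of _ "\<rho> @ [(q, a, b, r)]"]) simp
  qed
next
  assume "\<exists>\<rho>. run \<Delta> p \<rho> \<and> target p \<rho> = q \<and> run_input \<rho> = x \<and> run_output \<rho> = y"
  then obtain \<rho> where "run \<Delta> p \<rho>" "target p \<rho> = q" "run_input \<rho> = x" "run_output \<rho> = y"
    by blast
  then show "path \<Delta> p x y q"
  proof (induction \<rho> arbitrary: x y q rule: rev_induct)
    case Nil
    then show ?case by (simp add: path_nil)
  next
    case (snoc d \<rho>)
    obtain p' a b r where d: "d = (p', a, b, r)" by (cases d)
    with snoc.prems have "run \<Delta> p \<rho>" "(target p \<rho>, a, b, r) \<in> \<Delta>"
      and "q = r" "x = run_input \<rho> @ a" "y = run_output \<rho> @ b"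
      by auto
    with snoc.IH show ?case
      by (auto intro: path_snoc)
  qed
qed

lemma target_in_targets:
  "run \<Delta> p \<rho> \<Longrightarrow> target p \<rho> \<in> insert p ((\<lambda>(p, x, y, q). q) ` \<Delta>)"
  by (induction \<Delta> p \<rho> rule: run.induct) force+

lemma length_run_output_le:
  "run \<Delta> p \<rho> \<Longrightarrow> (\<And>p x y q. (p, x, y, q) \<in> \<Delta> \<Longrightarrow> length y \<le> K) \<Longrightarrow>
    length (run_output \<rho>) \<le> K * length \<rho>"
  by (induction \<Delta> p \<rho> rule: run.induct) (simp, fastforce)

definition input_prefixes :: "('a, 'b) transition set \<Rightarrow> 'a list set" where
  "input_prefixes \<Delta> = insert [] (\<Union>(p, x, y, q)\<in>\<Delta>. set (prefixes x))"

lemma finite_input_prefixes: "finite \<Delta> \<Longrightarrow> finite (input_prefixes \<Delta>)"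
  by (auto simp: input_prefixes_def)

lemma run_split_input:
  "run \<Delta> p \<rho> \<Longrightarrow> run_input \<rho> = u @ w \<Longrightarrow>
    \<exists>k z. k \<le> length \<rho> \<and> run_input (take k \<rho>) @ z = u \<and> run_input (drop k \<rho>) = z @ w \<and>
      z \<in> input_prefixes \<Delta>"
proof (induction \<Delta> p \<rho> arbitrary: u rule: run.induct)
  case (1 \<Delta> p)
  then show ?case by (simp add: input_prefixes_def)
next
  case (2 \<Delta> p p' x y q \<rho>)
  from "2.prems"(2) have "x @ run_input \<rho> = u @ w" by simp
  then obtain z where "x = u @ z \<and> z @ run_input \<rho> = w \<or> x @ z = u \<and> run_input \<rho> = z @ w"
    by (auto simp: append_eq_append_conv2)
  then show ?case
  proof
    assume split: "x = u @ z \<and> z @ run_input \<rho> = w"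
    with "2.prems"(1) have "u \<in> input_prefixes \<Delta>"
      by (force simp: input_prefixes_def)
    with split show ?thesis
      by (intro exI[of _ 0] exI[of _ u]) simp
  next
    assume split: "x @ z = u \<and> run_input \<rho> = z @ w"
    with "2.IH"[of z] "2.prems"(1) obtain k z' where "k \<le> length \<rho>"
      "run_input (take k \<rho>) @ z' = z" "run_input (drop k \<rho>) = z' @ w" "z' \<in> input_prefixes \<Delta>"
      by auto
    with split show ?thesis
      by (intro exI[of _ "Suc k"] exI[of _ z']) auto
  qed
qed

definition config :: "nat \<Rightarrow> ('a, 'b) transition list \<Rightarrow> nat \<Rightarrow> nat \<times> nat" where
  "config p \<rho> i = (target p (take i \<rho>), length (run_input (take i \<rho>)))"

text \<open>Equal configurations at \<open>i \<le> j\<close> delimit a loop that reads no input, so it can be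
  cut out.\<close>

lemma run_cut_loop:
  assumes "run \<Delta> p \<rho>" and "i \<le> j" and "config p \<rho> i = config p \<rho> j"
  shows "run \<Delta> p (take i \<rho> @ drop j \<rho>) \<and> target p (take i \<rho> @ drop j \<rho>) = target p \<rho> \<and>
    run_input (take i \<rho> @ drop j \<rho>) = run_input \<rho>"
proof -
  define \<sigma> where "\<sigma> = take (j - i) (drop i \<rho>)"
  have take_j: "take j \<rho> = take i \<rho> @ \<sigma>"
    using assms(2) take_add[of i "j - i" \<rho>] by (simp add: \<sigma>_def)
  then have split: "take i \<rho> @ \<sigma> @ drop j \<rho> = \<rho>"
    by (metis append.assoc append_take_drop_id)
  from assms(3) take_j have "target (target p (take i \<rho>)) \<sigma> = target p (take i \<rho>)"
    and "run_input \<sigma> = []"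
    by (auto simp: config_def)
  moreover have "run \<Delta> p (take i \<rho> @ \<sigma> @ drop j \<rho>)"
    using assms(1) by (simp only: split)
  moreover have "target p \<rho> = target p (take i \<rho> @ \<sigma> @ drop j \<rho>)"
    and "run_input \<rho> = run_input (take i \<rho> @ \<sigma> @ drop j \<rho>)"
    by (simp_all only: split)
  ultimately show ?thesis
    by simp
qed

lemma inj_config_length_bound:
  assumes "inj_on (config p \<rho>) {..k}" and "finite Q"
    and "\<And>i. i \<le> k \<Longrightarrow> target p (take i \<rho>) \<in> Q"
  shows "k < card Q * (length (run_input (take k \<rho>)) + 1)"
proof -
  have "config p \<rho> ` {..k} \<subseteq> Q \<times> {..length (run_input (take k \<rho>))}"
  proof (rule image_subsetI)
    fix i assume "i \<in> {..k}"
    then have "i \<le> k" by simp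
    then have "take k \<rho> = take i \<rho> @ take (k - i) (drop i \<rho>)"
      using take_add[of i "k - i" \<rho>] by simp
    then have "length (run_input (take i \<rho>)) \<le> length (run_input (take k \<rho>))"
      by (metis le_add1 length_append run_input_simps(3))
    with \<open>i \<le> k\<close> assms(3) show "config p \<rho> i \<in> Q \<times> {..length (run_input (take k \<rho>))}"
      by (simp add: config_def)
  qed
  from card_inj_on_le[OF assms(1) this] assms(2) show ?thesis
    by (simp add: card_cartesian_product)
qed

locale transducer_for =
  fixes t :: "'a list \<Rightarrow> 'b list option"
    and I F :: "nat set" and \<Delta> :: "('a, 'b) transition set"
  assumes finite_I: "finite I" and finite_\<Delta>: "finite \<Delta>"
    and graph_eq: "{(x, y). t x = Some y} = {(x, y). \<exists>p\<in>I. \<exists>q\<in>F. path \<Delta> p x y q}"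
begin

definition accepting :: "nat \<Rightarrow> ('a, 'b) transition list \<Rightarrow> bool" where
  "accepting p \<rho> \<longleftrightarrow> run \<Delta> p \<rho> \<and> target p \<rho> \<in> F"

lemma t_eq_Some_iff:
  "t x = Some y \<longleftrightarrow> (\<exists>p\<in>I. \<exists>\<rho>. accepting p \<rho> \<and> run_input \<rho> = x \<and> run_output \<rho> = y)"
proof -
  from graph_eq have "t x = Some y \<longleftrightarrow> (\<exists>p\<in>I. \<exists>q\<in>F. path \<Delta> p x y q)"
    by (simp add: set_eq_iff)
  then show ?thesis
    by (auto simp: path_iff_run accepting_def)
qed

definition states :: "nat set" where
  "states = I \<union> (\<lambda>(p, x, y, q). q) ` \<Delta>"

lemma finite_states: "finite states"
  using finite_I finite_\<Delta> by (simp add: states_def)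

lemma target_in_states: "p \<in> I \<Longrightarrow> run \<Delta> p \<rho> \<Longrightarrow> target p \<rho> \<in> states"
  using target_in_targets[of \<Delta> p \<rho>] by (auto simp: states_def)

definition max_output :: nat where
  "max_output = Max (insert 0 ((\<lambda>(p, x, y, q). length y) ` \<Delta>))"

lemma length_le_max_output:
  assumes "(p, x, y, q) \<in> \<Delta>"
  shows "length y \<le> max_output"
proof -
  from assms have "length y \<in> (\<lambda>(p, x, y, q). length y) ` \<Delta>"
    by force
  with finite_\<Delta> show ?thesis
    unfolding max_output_def by (intro Max_ge) auto
qed

lemma shortest_accepting_run:
  assumes "t x \<noteq> None"
  obtains p \<rho> where "p \<in> I" "accepting p \<rho>" "run_input \<rho> = x"
    "inj_on (config p \<rho>) {..length \<rho>}"
proof -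
  let ?A = "\<lambda>\<rho>. \<exists>p\<in>I. accepting p \<rho> \<and> run_input \<rho> = x"
  from assms obtain \<rho>\<^sub>0 where "?A \<rho>\<^sub>0"
    using t_eq_Some_iff by blast
  then obtain \<rho> where "?A \<rho>" and shortest: "\<And>\<sigma>. ?A \<sigma> \<Longrightarrow> length \<rho> \<le> length \<sigma>"
    using ex_has_least_nat[of ?A \<rho>\<^sub>0 length] by blast
  then obtain p where p: "p \<in> I" "accepting p \<rho>" "run_input \<rho> = x"
    by blast
  have no_loop: "config p \<rho> i \<noteq> config p \<rho> j" if "i < j" "j \<le> length \<rho>" for i j
  proof
    assume "config p \<rho> i = config p \<rho> j"
    with p \<open>i < j\<close> have "?A (take i \<rho> @ drop j \<rho>)"
      using run_cut_loop[of \<Delta> p \<rho> i j] by (auto simp: accepting_def)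
    with shortest have "length \<rho> \<le> length (take i \<rho> @ drop j \<rho>)" .
    with that show False by simp
  qed
  have "inj_on (config p \<rho>) {..length \<rho>}"
    by (rule inj_onI) (metis atMost_iff linorder_neqE_nat no_loop)
  with p show thesis by (rule that)
qed

lemma length_prefix_output_le:
  assumes "p \<in> I" and "run \<Delta> p \<rho>" and "inj_on (config p \<rho>) {..length \<rho>}"
    and "k \<le> length \<rho>" and "length (run_input (take k \<rho>)) \<le> n"
  shows "length (run_output (take k \<rho>)) \<le> max_output * card states * (n + 1)"
proof -
  have "k < card states * (length (run_input (take k \<rho>)) + 1)"
    using inj_config_length_bound[OF inj_on_subset[OF assms(3)] finite_states] assms(4)
    by (simp add: target_in_states[OF assms(1) run_take[OF assms(2)]])
  also have "\<dots> \<le> card states * (n + 1)"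
    using assms(5) by (intro mult_le_mono2) simp
  finally have "max_output * k \<le> max_output * (card states * (n + 1))"
    by (intro mult_le_mono2) simp
  moreover have "length (run_output (take k \<rho>)) \<le> max_output * k"
    using length_run_output_le[OF run_take[of \<Delta> p \<rho> k, OF assms(2)] length_le_max_output] assms(4)
    by simp
  ultimately show ?thesis
    by (simp only: mult.assoc)
qed

definition residual :: "nat \<times> 'a list \<Rightarrow> ('a list \<times> 'b list) set" where
  "residual c = {(w, run_output \<sigma>) | w \<sigma>. accepting (fst c) \<sigma> \<and> run_input \<sigma> = snd c @ w}"

definition configs :: "(nat \<times> 'a list) set" where
  "configs = states \<times> input_prefixes \<Delta>"

lemma finite_configs: "finite configs"
  using finite_states finite_input_prefixes[OF finite_\<Delta>] by (simp add: configs_def)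

lemma output_through_config:
  assumes "t (u @ w) \<noteq> None"
  obtains c \<alpha> where "c \<in> configs" "length \<alpha> \<le> max_output * card states * (length u + 1)"
    "w \<in> Domain (residual c)" "\<forall>w' y. (w', y) \<in> residual c \<longrightarrow> t (u @ w') = Some (\<alpha> @ y)"
proof -
  obtain p \<rho> where p: "p \<in> I" and acc: "accepting p \<rho>" and input: "run_input \<rho> = u @ w"
    and inj: "inj_on (config p \<rho>) {..length \<rho>}"
    using shortest_accepting_run[OF assms] .
  then have run: "run \<Delta> p \<rho>"
    by (simp add: accepting_def)
  obtain k z where k: "k \<le> length \<rho>" and u: "run_input (take k \<rho>) @ z = u"
    and w: "run_input (drop k \<rho>) = z @ w" and z: "z \<in> input_prefixes \<Delta>"
    using run_split_input[OF run input] by blast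
  define q where "q = target p (take k \<rho>)"
  define \<alpha> where "\<alpha> = run_output (take k \<rho>)"
  have prefix_run: "run \<Delta> p (take k \<rho>)" and suffix_acc: "accepting q (drop k \<rho>)"
    using acc run_append[of \<Delta> p "take k \<rho>" "drop k \<rho>"]
      target_append[of p "take k \<rho>" "drop k \<rho>"]
    by (simp_all add: accepting_def q_def)
  have "length (run_input (take k \<rho>)) \<le> length u"
    using arg_cong[OF u, of length] by simp
  then have length_\<alpha>: "length \<alpha> \<le> max_output * card states * (length u + 1)"
    unfolding \<alpha>_def by (rule length_prefix_output_le[OF p run inj k])
  have config: "(q, z) \<in> configs"
    using z target_in_states[OF p prefix_run] by (simp add: configs_def q_def)
  have domain: "w \<in> Domain (residual (q, z))"
  proof
    show "(w, run_output (drop k \<rho>)) \<in> residual (q, z)"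
      unfolding residual_def using suffix_acc w
      by (intro CollectI exI[of _ w] exI[of _ "drop k \<rho>"]) simp
  qed
  have continuation: "\<forall>w' y. (w', y) \<in> residual (q, z) \<longrightarrow> t (u @ w') = Some (\<alpha> @ y)"
  proof (intro allI impI)
    fix w' y assume "(w', y) \<in> residual (q, z)"
    then obtain \<sigma> where \<sigma>: "accepting q \<sigma>" "run_input \<sigma> = z @ w'" "y = run_output \<sigma>"
      by (auto simp: residual_def)
    with prefix_run have "accepting p (take k \<rho> @ \<sigma>)"
      by (simp add: accepting_def q_def)
    moreover have "run_input (take k \<rho> @ \<sigma>) = u @ w'"
      using \<sigma>(2) u by simp
    moreover have "run_output (take k \<rho> @ \<sigma>) = \<alpha> @ y"
      using \<sigma>(3) by (simp add: \<alpha>_def)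
    ultimately show "t (u @ w') = Some (\<alpha> @ y)"
      using p unfolding t_eq_Some_iff by blast
  qed
  show thesis
    using config length_\<alpha> domain continuation by (rule that)
qed

definition residual_dists :: "nat \<times> 'a list \<Rightarrow> nat \<times> 'a list \<Rightarrow> nat set" where
  "residual_dists c c' = {wdist y y' | w y y'. (w, y) \<in> residual c \<and> (w, y') \<in> residual c'}"

definition residual_bound :: nat where
  "residual_bound = Max (insert 0
    (\<Union>(c, c') \<in> {(c, c') \<in> configs \<times> configs. finite (residual_dists c c')}. residual_dists c c'))"

lemma le_residual_bound:
  assumes "c \<in> configs" "c' \<in> configs" "finite (residual_dists c c')" "n \<in> residual_dists c c'"
  shows "n \<le> residual_bound"
proof -
  let ?G = "{(c, c') \<in> configs \<times> configs. finite (residual_dists c c')}"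
  have "finite ?G"
    by (rule finite_subset[OF _ finite_cartesian_product[OF finite_configs finite_configs]]) auto
  then have "finite (\<Union>(c, c') \<in> ?G. residual_dists c c')"
    by (rule finite_UN_I) auto
  moreover have "n \<in> (\<Union>(c, c') \<in> ?G. residual_dists c c')"
    using assms by blast
  ultimately show ?thesis
    unfolding residual_bound_def by (intro Max_ge) auto
qed

lemma wdist_le_affine:
  assumes "t (u @ w) \<noteq> None" and "t (v @ w) \<noteq> None" and "R_rel t u v"
  shows "wdist (the (t (u @ w))) (the (t (v @ w))) \<le>
    max_output * card states * (length u + 1) + max_output * card states * (length v + 1) +
    residual_bound"
proof -
  obtain c \<alpha> where c: "c \<in> configs"
    and \<alpha>: "length \<alpha> \<le> max_output * card states * (length u + 1)"
    and "w \<in> Domain (residual c)"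
    and out_u: "\<forall>w' y. (w', y) \<in> residual c \<longrightarrow> t (u @ w') = Some (\<alpha> @ y)"
    using output_through_config[OF assms(1)] .
  then obtain y where y: "(w, y) \<in> residual c"
    by blast
  obtain c' \<beta> where c': "c' \<in> configs"
    and \<beta>: "length \<beta> \<le> max_output * card states * (length v + 1)"
    and "w \<in> Domain (residual c')"
    and out_v: "\<forall>w' y. (w', y) \<in> residual c' \<longrightarrow> t (v @ w') = Some (\<beta> @ y)"
    using output_through_config[OF assms(2)] .
  then obtain y' where y': "(w, y') \<in> residual c'"
    by blast
  define D where "D = {wdist (the (t (u @ w))) (the (t (v @ w))) | w.
    t (u @ w) \<noteq> None \<and> t (v @ w) \<noteq> None}"
  have "finite D"
    using assms(3) by (simp add: R_rel_def D_def)
  have "residual_dists c c' \<subseteq> {..Max D + length \<alpha> + length \<beta>}"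
  proof
    fix n assume "n \<in> residual_dists c c'"
    then obtain w' z z' where n: "n = wdist z z'"
      and "(w', z) \<in> residual c" and "(w', z') \<in> residual c'"
      by (auto simp: residual_dists_def)
    then have "t (u @ w') = Some (\<alpha> @ z)" "t (v @ w') = Some (\<beta> @ z')"
      using out_u out_v by blast+
    then have "wdist (\<alpha> @ z) (\<beta> @ z') \<in> D"
      unfolding D_def by force
    with \<open>finite D\<close> have "wdist (\<alpha> @ z) (\<beta> @ z') \<le> Max D"
      by simp
    with n show "n \<in> {..Max D + length \<alpha> + length \<beta>}"
      using wdist_le_append[of z z' \<alpha> \<beta>] by simp
  qed
  then have "finite (residual_dists c c')"
    by (rule finite_subset) simp
  moreover have "wdist y y' \<in> residual_dists c c'"
    using y y' by (auto simp: residual_dists_def)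
  ultimately have "wdist y y' \<le> residual_bound"
    by (rule le_residual_bound[OF c c'])
  moreover have "wdist (the (t (u @ w))) (the (t (v @ w))) = wdist (\<alpha> @ y) (\<beta> @ y')"
    using out_u y out_v y' by simp
  ultimately show ?thesis
    using wdist_append_le[of \<alpha> y \<beta> y'] \<alpha> \<beta> by linarith
qed

lemma wdist_le_linear:
  assumes "t (u @ w) \<noteq> None" and "t (v @ w) \<noteq> None" and "R_rel t u v"
  shows "wdist (the (t (u @ w))) (the (t (v @ w))) \<le>
    (3 * max_output * card states + residual_bound) * (length u + length v)"
proof (cases "u = [] \<and> v = []")
  case True
  then show ?thesis
    by (simp add: wdist_self)
next
  case False
  then have "1 \<le> length u + length v"
    by (simp add: Suc_le_eq)
  define C where "C = max_output * card states"
  have "wdist (the (t (u @ w))) (the (t (v @ w))) \<le>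
      C * (length u + 1) + C * (length v + 1) + residual_bound"
    using wdist_le_affine[OF assms] by (simp add: C_def)
  also have "\<dots> = C * (length u + length v) + (2 * C + residual_bound) * 1"
    by (simp add: algebra_simps)
  also have "\<dots> \<le> C * (length u + length v) + (2 * C + residual_bound) * (length u + length v)"
    using \<open>1 \<le> length u + length v\<close> by (intro add_left_mono mult_le_mono2)
  also have "\<dots> = (3 * max_output * card states + residual_bound) * (length u + length v)"
    by (simp add: C_def algebra_simps)
  finally show ?thesis .
qed

end

lemma rational_function_imp_transducer:
  "rational_function t \<Longrightarrow> \<exists>I F \<Delta>. transducer_for t I F \<Delta>"
  unfolding rational_function_def rational_relation_def transducer_for_def by blast

theorem lemma20:
  fixes t :: "'a list \<Rightarrow> 'b list option"
  assumes "rational_function t"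
    and "suffix_closed {x. t x \<noteq> None}"
  shows "\<exists>c::nat. \<forall>u v w. t (u @ w) \<noteq> None \<longrightarrow> t (v @ w) \<noteq> None \<longrightarrow> R_rel t u v \<longrightarrow>
            wdist (the (t (u @ w))) (the (t (v @ w))) \<le> c * (length u + length v)"
proof -
  obtain I F \<Delta> where "transducer_for t I F \<Delta>"
    using rational_function_imp_transducer[OF assms(1)] by blast
  then interpret transducer_for t I F \<Delta> .
  show ?thesis
    using wdist_le_linear by blast
qed

end
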